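(* Let $n\geqslant 2$ and $N=\{1,\ldots,n\}$. Then $\mathscr{BG}(n)$, viewed as a subset of $\mathbb{R}^{2^N\setminus\{\varnothing\}}$, is a $(2^n-1)$-dimensional polyhedral cone which is not pointed. Its lineality space has dimension $n$, with basis $(w_i)_{i\in N}$, where $w_i=\sum_{S\subseteq N,\, S\ni i}\delta_S$.
   Context: A game on $N=\{1,\ldots,n\}$ is a map $v:2^N\to\mathbb{R}$ with $v(\varnothing)=0$; games are identified with vectors in $\mathbb{R}^{2^N\setminus\{\varnothing\}}$. For nonempty $S\subseteq N$, the Dirac game $\delta_S$ is defined by $\delta_S(T)=1$ if $T=S$ and $0$ otherwise. A collection $\mathscr{B}$ of nonempty subsets of $N$ is balanced if there exist positive weights $(\lambda_S)_{S\in\mathscr{B}}$ with $\sum_{S\in\mathscr{B},S\ni i}\lambda_S=1$ for all $i\in N$; it is minimal balanced if no proper subcollection is balanced; a minimal balanced collection has a unique system of such weights, denoted $\lambda^{\mathscr{B}}_S$. $\mathfrak{B}^*(n)$ denotes the set of all minimal balanced collections on $N$ other than $\{N\}$. $\mathscr{BG}(n)$ is the set of games $v$ with $\sum_{S\in\mathscr{B}}\lambda^{\mathscr{B}}_S v(S)\leqslant v(N)$ for all $\mathscr{B}\in\mathfrak{B}^*(n)$ (the balanced games, equivalently those with nonempty core). *)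

theory Defs
  imports "HOL-Analysis.Analysis"
begin

text \<open>Players form a finite type 'n (N = UNIV, n = CARD('n)).  A game is a vector
  indexed by coalitions, i.e. of type real ^ ('n set), with value 0 at the empty set;
  the game space is thus the coordinate subspace {v. v $ {} = 0}, identified with
  R^(2^N minus the empty set).\<close>

definition games :: "(real ^ ('n::finite set)) set" where
  "games = {v. v $ {} = 0}"

definition dirac :: "'n::finite set \<Rightarrow> real ^ ('n set)" where
  "dirac S = (\<chi> T. if T = S then 1 else 0)"

definition balancing_weights :: "'n::finite set set \<Rightarrow> ('n set \<Rightarrow> real) \<Rightarrow> bool" where
  "balancing_weights B lam \<longleftrightarrow>
     (\<forall>S\<in>B. lam S > 0) \<and> (\<forall>i. (\<Sum>S\<in>{S\<in>B. i \<in> S}. lam S) = 1)"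

definition balanced :: "'n::finite set set \<Rightarrow> bool" where
  "balanced B \<longleftrightarrow> {} \<notin> B \<and> (\<exists>lam. balancing_weights B lam)"

definition minimal_balanced :: "'n::finite set set \<Rightarrow> bool" where
  "minimal_balanced B \<longleftrightarrow> balanced B \<and> (\<forall>B'. B' \<subset> B \<longrightarrow> \<not> balanced B')"

definition bweight :: "'n::finite set set \<Rightarrow> 'n set \<Rightarrow> real" where
  "bweight B = (THE lam. balancing_weights B lam \<and> (\<forall>S. S \<notin> B \<longrightarrow> lam S = 0))"

definition Bstar :: "'n::finite set set set" where
  "Bstar = {B. minimal_balanced B \<and> B \<noteq> {UNIV}}"

definition balanced_games :: "(real ^ ('n::finite set)) set" where
  "balanced_games = {v \<in> games.
     \<forall>B\<in>Bstar. (\<Sum>S\<in>B. bweight B S * v $ S) \<le> v $ UNIV}"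

definition lineality_space :: "'a::real_vector set \<Rightarrow> 'a set" where
  "lineality_space C = C \<inter> uminus ` C"

definition pointed :: "'a::real_vector set \<Rightarrow> bool" where
  "pointed C \<longleftrightarrow> lineality_space C = {0}"

definition wvec :: "'n::finite \<Rightarrow> real ^ ('n set)" where
  "wvec i = (\<Sum>S\<in>{S. i \<in> S}. dirac S)"

end

theory Submission
  imports Defs
begin

text \<open>
  The game space is the hyperplane v({}) = 0, and each B in B*(n) contributes the linear
  inequality sum_S lambda_S v(S) - v(N) <= 0, so BG(n) is the polar cone of finitely many
  vectors: a polyhedral cone whose lineality space is cut out by the corresponding equalities.
  Since no B in B*(n) contains N, raising v(N) makes every game balanced, so BG(n) spans the
  whole (2^n - 1)-dimensional game space.  Every partition of N is minimal balanced with unit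
  weights; for n >= 2 the equalities for the partitions {T} + singletons and the partition into
  singletons force v(T) = sum_{i in T} v({i}), so the lineality space is the space of additive
  games, with basis (w_i).
\<close>

lemma balanced_support_of_nonneg_weights:
  fixes B :: "'n::finite set set" and nu :: "'n set \<Rightarrow> real"
  assumes "{} \<notin> B" and nonneg: "\<And>S. S \<in> B \<Longrightarrow> nu S \<ge> 0"
    and sums: "\<And>i. (\<Sum>S\<in>{S\<in>B. i \<in> S}. nu S) = 1"
  shows "balanced {S\<in>B. nu S > 0}"
  unfolding balanced_def balancing_weights_def
proof (intro conjI exI allI ballI)
  fix i :: 'n
  have "(\<Sum>S\<in>{S\<in>{S\<in>B. nu S > 0}. i \<in> S}. nu S) = (\<Sum>S\<in>{S\<in>B. i \<in> S}. nu S)"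
    using nonneg by (intro sum.mono_neutral_left) (auto simp: less_le)
  then show "(\<Sum>S\<in>{S\<in>{S\<in>B. nu S > 0}. i \<in> S}. nu S) = 1"
    using sums by simp
qed (use assms(1) in auto)

lemma minimal_balanced_weights_le:
  fixes B :: "'n::finite set set"
  assumes min: "minimal_balanced B" and lam: "balancing_weights B lam" and mu: "balancing_weights B mu"
    and "S \<in> B"
  shows "mu S \<le> lam S"
proof (rule ccontr)
  assume "\<not> mu S \<le> lam S"
  define D where "D = {S\<in>B. lam S < mu S}"
  define ratio where "ratio S = lam S / (mu S - lam S)" for S
  have "D \<noteq> {}" using \<open>S \<in> B\<close> \<open>\<not> mu S \<le> lam S\<close> by (auto simp: D_def)
  then obtain S0 where S0: "S0 \<in> D" and least: "\<And>S. S \<in> D \<Longrightarrow> ratio S0 \<le> ratio S"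
    using ex_is_arg_min_if_finite[of D ratio] by (auto simp: is_arg_min_linorder)
  define t where "t = ratio S0"
  have lam_pos: "\<And>S. S \<in> B \<Longrightarrow> lam S > 0" using lam by (simp add: balancing_weights_def)
  have "t > 0" using S0 lam_pos by (simp add: t_def ratio_def D_def)
  \<comment> \<open>move from lam away from mu until the first weight vanishes\<close>
  define nu where "nu S = lam S - t * (mu S - lam S)" for S
  have nonneg: "nu S \<ge> 0" if "S \<in> B" for S
  proof (cases "S \<in> D")
    case True
    then have "t * (mu S - lam S) \<le> lam S"
      using least[OF True] by (simp add: t_def ratio_def D_def pos_le_divide_eq)
    then show ?thesis by (simp add: nu_def)
  next
    case False
    then have "t * (mu S - lam S) \<le> 0"
      using that \<open>t > 0\<close> by (auto simp: D_def intro: mult_nonneg_nonpos)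
    then show ?thesis using lam_pos[OF that] by (simp add: nu_def)
  qed
  have sums: "(\<Sum>S\<in>{S\<in>B. i \<in> S}. nu S) = 1" for i
  proof -
    have "(\<Sum>S\<in>{S\<in>B. i \<in> S}. nu S)
        = (1 + t) * (\<Sum>S\<in>{S\<in>B. i \<in> S}. lam S) - t * (\<Sum>S\<in>{S\<in>B. i \<in> S}. mu S)"
      by (simp add: nu_def sum_subtractf sum_distrib_left sum.distrib algebra_simps)
    then show ?thesis using lam mu by (simp add: balancing_weights_def)
  qed
  have "nu S0 = 0" using S0 by (simp add: nu_def t_def ratio_def D_def field_simps)
  then have "{S\<in>B. nu S > 0} \<subset> B" using S0 by (force simp: D_def)
  moreover have "balanced {S\<in>B. nu S > 0}"
    using min nonneg sums
    by (intro balanced_support_of_nonneg_weights) (auto simp: minimal_balanced_def balanced_def)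
  ultimately show False using min by (auto simp: minimal_balanced_def)
qed

lemma minimal_balanced_weights_unique:
  fixes B :: "'n::finite set set"
  assumes "minimal_balanced B" "balancing_weights B lam" "balancing_weights B mu" "S \<in> B"
  shows "lam S = mu S"
  using minimal_balanced_weights_le[OF assms] minimal_balanced_weights_le[OF assms(1,3,2,4)]
  by simp

lemma
  fixes B :: "'n::finite set set"
  assumes "minimal_balanced B"
  shows balancing_weights_bweight: "balancing_weights B (bweight B)"
    and bweight_eq_0: "S \<notin> B \<Longrightarrow> bweight B S = 0"
proof -
  obtain lam where lam: "balancing_weights B lam"
    using assms by (auto simp: minimal_balanced_def balanced_def)
  define lam0 where "lam0 S = (if S \<in> B then lam S else 0)" for S
  have "balancing_weights B lam0"
    using lam by (simp add: balancing_weights_def lam0_def)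
  have unique: "l = lam0" if "balancing_weights B l" "\<forall>S. S \<notin> B \<longrightarrow> l S = 0" for l
  proof
    fix S show "l S = lam0 S"
      using minimal_balanced_weights_unique[OF assms that(1) \<open>balancing_weights B lam0\<close>] that(2)
      by (cases "S \<in> B") (auto simp: lam0_def)
  qed
  have "\<forall>S. S \<notin> B \<longrightarrow> lam0 S = 0" by (simp add: lam0_def)
  with \<open>balancing_weights B lam0\<close>
  have "\<exists>!l. balancing_weights B l \<and> (\<forall>S. S \<notin> B \<longrightarrow> l S = 0)"
    using unique by blast
  then have "balancing_weights B (bweight B) \<and> (\<forall>S. S \<notin> B \<longrightarrow> bweight B S = 0)"
    unfolding bweight_def by (rule theI')
  then show "balancing_weights B (bweight B)" and "S \<notin> B \<Longrightarrow> bweight B S = 0"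
    by auto
qed

lemma partition_on_containing_eq:
  assumes "partition_on A P" "S \<in> P" "i \<in> S"
  shows "{T\<in>P. i \<in> T} = {S}"
  using assms by (auto simp: partition_on_def disjoint_def)

lemma partition_on_UNIV_minimal_balanced:
  fixes P :: "'n::finite set set"
  assumes P: "partition_on UNIV P"
  shows "minimal_balanced P"
  unfolding minimal_balanced_def balanced_def
proof (intro conjI allI impI)
  show "{} \<notin> P" using P by (rule partition_onD3)
  show "\<exists>lam. balancing_weights P lam"
  proof (intro exI)
    show "balancing_weights P (\<lambda>_. 1)"
      unfolding balancing_weights_def
    proof (intro conjI allI ballI)
      fix i :: 'n
      obtain S where "S \<in> P" "i \<in> S" using partition_onD1[OF P] by blast
      then show "(\<Sum>S\<in>{S\<in>P. i \<in> S}. 1) = (1::real)"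
        by (simp add: partition_on_containing_eq[OF P])
    qed simp
  qed
next
  fix B' assume "B' \<subset> P"
  then obtain S where S: "S \<in> P" "S \<notin> B'" by auto
  then obtain i where "i \<in> S" using partition_onD3[OF P] by fastforce
  have "{T\<in>B'. i \<in> T} \<subseteq> {T\<in>P. i \<in> T} - {S}" using \<open>B' \<subset> P\<close> S(2) by auto
  then have "{T\<in>B'. i \<in> T} = {}"
    unfolding partition_on_containing_eq[OF P S(1) \<open>i \<in> S\<close>] by blast
  then show "\<not> ({} \<notin> B' \<and> (\<exists>lam. balancing_weights B' lam))"
    unfolding balancing_weights_def by (metis sum.empty zero_neq_one)
qed

lemma bweight_partition_on_UNIV:
  fixes P :: "'n::finite set set"
  assumes P: "partition_on UNIV P" and "S \<in> P"
  shows "bweight P S = 1"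
proof -
  obtain i where "i \<in> S" using partition_onD3[OF P] \<open>S \<in> P\<close> by fastforce
  have "(\<Sum>T\<in>{T\<in>P. i \<in> T}. bweight P T) = 1"
    using balancing_weights_bweight[OF partition_on_UNIV_minimal_balanced[OF P]]
    by (simp add: balancing_weights_def)
  then show ?thesis
    by (simp add: partition_on_containing_eq[OF P \<open>S \<in> P\<close> \<open>i \<in> S\<close>])
qed

lemma UNIV_notin_Bstar:
  fixes B :: "'n::finite set set"
  assumes "B \<in> Bstar"
  shows "UNIV \<notin> B"
proof
  assume "UNIV \<in> B"
  then have "{UNIV} \<subset> B" using assms by (auto simp: Bstar_def)
  have "minimal_balanced {UNIV :: 'n set}"
    by (intro partition_on_UNIV_minimal_balanced partition_on_space) simp
  then have "balanced {UNIV :: 'n set}"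
    by (simp add: minimal_balanced_def)
  with assms \<open>{UNIV} \<subset> B\<close> show False by (auto simp: Bstar_def minimal_balanced_def)
qed

definition polar_cone :: "'a::real_inner set \<Rightarrow> 'a set" where
  "polar_cone A = {x. \<forall>a\<in>A. a \<bullet> x \<le> 0}"

lemma cone_polar_cone: "cone (polar_cone A)"
  by (auto simp: cone_def polar_cone_def mult_nonneg_nonpos)

lemma polyhedron_polar_cone:
  fixes A :: "'a::euclidean_space set"
  assumes "finite A"
  shows "polyhedron (polar_cone A)"
proof -
  have "polar_cone A = \<Inter> ((\<lambda>a. {x. a \<bullet> x \<le> 0}) ` A)"
    by (auto simp: polar_cone_def)
  then show ?thesis
    using assms by (auto intro: polyhedron_halfspace_le)
qed

lemma lineality_space_polar_cone:
  "lineality_space (polar_cone A) = {x. \<forall>a\<in>A. orthogonal a x}"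
proof -
  have "x \<in> uminus ` polar_cone A \<longleftrightarrow> - x \<in> polar_cone A" for x
    by (metis image_iff minus_minus rev_image_eqI)
  then show ?thesis
    by (auto simp: lineality_space_def polar_cone_def orthogonal_def intro: antisym)
qed

lemma inner_dirac: "dirac S \<bullet> v = v $ S"
proof -
  have "dirac S \<bullet> v = (\<Sum>T\<in>UNIV. if T = S then v $ T else 0)"
    unfolding inner_vec_def dirac_def by (intro sum.cong) auto
  then show ?thesis by simp
qed

lemma dirac_nonzero: "dirac S \<noteq> 0"
proof
  assume "dirac S = 0"
  then have "dirac S $ S = 0" by simp
  then show False by (simp add: dirac_def)
qed

lemma games_eq_hyperplane: "games = {v. dirac {} \<bullet> v = 0}"
  by (simp add: games_def inner_dirac)

definition balancedness_normal :: "'n::finite set set \<Rightarrow> real ^ ('n set)" where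
  "balancedness_normal B = (\<chi> S. bweight B S) - dirac UNIV"

lemma inner_balancedness_normal:
  assumes "minimal_balanced B"
  shows "balancedness_normal B \<bullet> v = (\<Sum>S\<in>B. bweight B S * v $ S) - v $ UNIV"
proof -
  have "(\<chi> S. bweight B S) \<bullet> v = (\<Sum>S\<in>B. bweight B S * v $ S)"
    unfolding inner_vec_def vec_lambda_beta inner_real_def
    by (rule sum.mono_neutral_right) (auto simp: bweight_eq_0[OF assms])
  then show ?thesis by (simp add: balancedness_normal_def inner_diff_left inner_dirac)
qed

lemma inner_balancedness_normal_dirac_UNIV:
  assumes "B \<in> Bstar"
  shows "balancedness_normal B \<bullet> dirac UNIV = -1"
  using assms UNIV_notin_Bstar[OF assms]
  by (simp add: inner_balancedness_normal Bstar_def dirac_def sum.neutral)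

lemma balanced_games_eq_polar_cone:
  "balanced_games = polar_cone (insert (dirac {}) (insert (- dirac {}) (balancedness_normal ` Bstar)))"
  by (auto simp: balanced_games_def games_def polar_cone_def inner_dirac Bstar_def
      inner_balancedness_normal)

lemma polyhedron_balanced_games: "polyhedron balanced_games"
  unfolding balanced_games_eq_polar_cone by (rule polyhedron_polar_cone) simp

lemma cone_balanced_games: "cone balanced_games"
  unfolding balanced_games_eq_polar_cone by (rule cone_polar_cone)

lemma dirac_UNIV_in_balanced_games: "dirac UNIV \<in> balanced_games"
  by (simp add: balanced_games_eq_polar_cone polar_cone_def inner_dirac
      inner_balancedness_normal_dirac_UNIV) (simp add: dirac_def)

lemma span_balanced_games: "span balanced_games = games"
proof
  show "span balanced_games \<subseteq> games"
    unfolding games_eq_hyperplane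
    by (rule span_minimal)
      (auto simp: balanced_games_def games_eq_hyperplane intro: subspace_hyperplane)
  show "games \<subseteq> span balanced_games"
  proof
    fix v :: "real ^ ('n::finite set)" assume v: "v \<in> games"
    \<comment> \<open>raising the worth of the grand coalition enough makes every game balanced\<close>
    define c where "c = (\<Sum>B\<in>Bstar. \<bar>balancedness_normal B \<bullet> v\<bar>)"
    define u where "u = v + c *\<^sub>R dirac UNIV"
    have "balancedness_normal B \<bullet> u \<le> 0" if "B \<in> Bstar" for B
    proof -
      have "balancedness_normal B \<bullet> v \<le> \<bar>balancedness_normal B \<bullet> v\<bar>" by simp
      also have "\<dots> \<le> c"
        unfolding c_def using that by (intro member_le_sum) auto
      finally have "balancedness_normal B \<bullet> v \<le> c" .
      then show ?thesis
        by (simp add: u_def inner_add_right inner_balancedness_normal_dirac_UNIV[OF that])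
    qed
    moreover have "dirac {} \<bullet> u = 0"
      using v by (simp add: u_def games_def inner_add_right inner_dirac) (simp add: dirac_def)
    ultimately have "u \<in> balanced_games"
      by (auto simp: balanced_games_eq_polar_cone polar_cone_def)
    then have "u - c *\<^sub>R dirac UNIV \<in> span balanced_games"
      using dirac_UNIV_in_balanced_games by (intro span_diff span_scale span_base)
    then show "v \<in> span balanced_games" by (simp add: u_def)
  qed
qed

lemma aff_dim_balanced_games:
  "aff_dim (balanced_games :: (real ^ ('n::finite set)) set) = 2 ^ CARD('n) - 1"
proof -
  have "0 \<in> (balanced_games :: (real ^ ('n set)) set)"
    by (simp add: balanced_games_def games_def)
  then have "aff_dim (balanced_games :: (real ^ ('n set)) set)
      = dim (balanced_games :: (real ^ ('n set)) set)"
    by (simp add: aff_dim_zero hull_inc)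
  also have "\<dots> = dim (games :: (real ^ ('n set)) set)"
    by (metis dim_span span_balanced_games)
  also have "\<dots> = DIM(real ^ ('n set)) - 1"
    by (simp add: games_eq_hyperplane dim_hyperplane dirac_nonzero)
  also have "DIM(real ^ ('n set)) = 2 ^ CARD('n)"
    using card_Pow[of "UNIV :: 'n set"] by simp
  finally show ?thesis by (simp add: of_nat_diff)
qed

lemma lineality_space_balanced_games:
  "lineality_space balanced_games =
     {v. v $ {} = 0 \<and> (\<forall>B\<in>Bstar. (\<Sum>S\<in>B. bweight B S * v $ S) = v $ UNIV)}"
  by (auto simp: balanced_games_eq_polar_cone lineality_space_polar_cone orthogonal_def
      inner_dirac inner_balancedness_normal Bstar_def)

lemma subspace_lineality_space_balanced_games: "subspace (lineality_space balanced_games)"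
  unfolding balanced_games_eq_polar_cone lineality_space_polar_cone
  by (rule subspace_orthogonal_to_vectors)

lemma wvec_nth: "wvec i $ T = (if i \<in> T then 1 else 0)"
proof -
  have "wvec i $ T = (\<Sum>S\<in>{S. i \<in> S}. if T = S then 1 else 0)"
    by (simp add: wvec_def dirac_def)
  then show ?thesis by (simp add: sum.delta')
qed

lemma wvec_in_lineality_space: "wvec i \<in> lineality_space balanced_games"
proof -
  have "(\<Sum>S\<in>B. bweight B S * wvec i $ S) = 1" if "B \<in> Bstar" for B
  proof -
    have "(\<Sum>S\<in>B. bweight B S * wvec i $ S) = (\<Sum>S\<in>{S\<in>B. i \<in> S}. bweight B S)"
      by (simp add: wvec_nth sum.inter_filter[symmetric] if_distrib cong: if_cong)
    also have "\<dots> = 1"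
      using balancing_weights_bweight that by (auto simp: Bstar_def balancing_weights_def)
    finally show ?thesis .
  qed
  then show ?thesis by (simp add: lineality_space_balanced_games wvec_nth)
qed

lemma sum_partition_on_UNIV_lineality_space:
  assumes "v \<in> lineality_space balanced_games" "partition_on UNIV P" "P \<noteq> {UNIV}"
  shows "(\<Sum>S\<in>P. v $ S) = v $ UNIV"
proof -
  have "P \<in> Bstar"
    using assms(2,3) partition_on_UNIV_minimal_balanced by (auto simp: Bstar_def)
  then have "(\<Sum>S\<in>P. bweight P S * v $ S) = v $ UNIV"
    using assms(1) by (simp add: lineality_space_balanced_games)
  then show ?thesis
    by (simp add: bweight_partition_on_UNIV[OF assms(2)])
qed

lemma lineality_space_balanced_games_complement:
  fixes v :: "real ^ ('n::finite set)"
  assumes v: "v \<in> lineality_space balanced_games" and "T \<noteq> {}" "T \<noteq> UNIV"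
  shows "v $ UNIV = v $ T + (\<Sum>j\<in>-T. v $ {j})"
proof -
  let ?P = "insert T ((\<lambda>j. {j}) ` (- T))"
  have "partition_on UNIV ?P"
    using assms(2) partition_on_singletons[of "- T"]
    by (subst partition_on_insert) (auto simp: disjnt_def Compl_eq_Diff_UNIV)
  moreover have "?P \<noteq> {UNIV}" using assms(3) by auto
  ultimately have "v $ UNIV = (\<Sum>S\<in>?P. v $ S)"
    using sum_partition_on_UNIV_lineality_space[OF v] by simp
  also have "\<dots> = v $ T + (\<Sum>S\<in>(\<lambda>j. {j}) ` (- T). v $ S)"
    using \<open>T \<noteq> {}\<close> by (intro sum.insert) auto
  also have "\<dots> = v $ T + (\<Sum>j\<in>-T. v $ {j})"
    by (simp add: sum.reindex)
  finally show ?thesis .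
qed

lemma lineality_space_balanced_games_additive:
  fixes v :: "real ^ ('n::finite set)"
  assumes n: "CARD('n) \<ge> 2" and v: "v \<in> lineality_space balanced_games"
  shows "v $ T = (\<Sum>j\<in>T. v $ {j})"
proof -
  have "{i} \<noteq> UNIV" for i :: 'n
  proof
    assume "{i} = UNIV"
    then have "CARD('n) = card {i}" by simp
    with n show False by simp
  qed
  then have "v $ UNIV = v $ {undefined} + (\<Sum>j\<in>-{undefined}. v $ {j})"
    by (intro lineality_space_balanced_games_complement[OF v]) auto
  also have "\<dots> = (\<Sum>j\<in>UNIV. v $ {j})"
    by (simp add: sum.remove[of UNIV undefined] Compl_eq_Diff_UNIV)
  finally have total: "v $ UNIV = (\<Sum>j\<in>UNIV. v $ {j})" .
  consider "T = {}" | "T = UNIV" | "T \<noteq> {}" "T \<noteq> UNIV" by blast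
  then show ?thesis
  proof cases
    case 1
    then show ?thesis using v by (simp add: lineality_space_balanced_games)
  next
    case 2
    then show ?thesis using total by simp
  next
    case 3
    have "(\<Sum>j\<in>UNIV. v $ {j}) = (\<Sum>j\<in>-T. v $ {j}) + (\<Sum>j\<in>T. v $ {j})"
      by (simp add: sum.subset_diff[of T UNIV] Compl_eq_Diff_UNIV)
    then show ?thesis using lineality_space_balanced_games_complement[OF v 3] total by simp
  qed
qed

lemma span_wvec:
  assumes "CARD('n::finite) \<ge> 2"
  shows "span (range (wvec :: 'n \<Rightarrow> real ^ ('n set))) = lineality_space balanced_games"
proof
  show "span (range wvec) \<subseteq> (lineality_space balanced_games :: (real ^ ('n set)) set)"
    by (rule span_minimal)
      (auto intro: wvec_in_lineality_space subspace_lineality_space_balanced_games)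
  show "(lineality_space balanced_games :: (real ^ ('n set)) set) \<subseteq> span (range wvec)"
  proof
    fix v :: "real ^ ('n set)" assume v: "v \<in> lineality_space balanced_games"
    have "v = (\<Sum>j\<in>UNIV. v $ {j} *\<^sub>R wvec j)"
      unfolding vec_eq_iff
    proof
      fix T :: "'n set"
      have "(\<Sum>j\<in>UNIV. v $ {j} *\<^sub>R wvec j) $ T = (\<Sum>j\<in>T. v $ {j})"
        by (simp add: sum_component wvec_nth if_distrib sum.If_cases cong: if_cong)
      then show "v $ T = (\<Sum>j\<in>UNIV. v $ {j} *\<^sub>R wvec j) $ T"
        using lineality_space_balanced_games_additive[OF assms v, of T] by simp
    qed
    also have "\<dots> \<in> span (range wvec)"
      by (intro span_sum span_scale span_base rangeI)
    finally show "v \<in> span (range wvec)" .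
  qed
qed

lemma inj_wvec: "inj (wvec :: 'n::finite \<Rightarrow> real ^ ('n set))"
proof
  fix i j :: 'n assume "wvec i = wvec j"
  then have "wvec i $ {i} = wvec j $ {i}" by simp
  then show "i = j" by (simp add: wvec_nth split: if_splits)
qed

lemma independent_wvec: "independent (range (wvec :: 'n::finite \<Rightarrow> real ^ ('n set)))"
proof (rule independent_if_scalars_zero)
  fix f :: "real ^ ('n set) \<Rightarrow> real" and w :: "real ^ ('n set)"
  assume sum0: "(\<Sum>x\<in>range wvec. f x *\<^sub>R x) = 0" and "w \<in> range wvec"
  have "(\<Sum>j\<in>UNIV. f (wvec j) *\<^sub>R wvec j) $ {i} = 0" for i :: 'n
    using sum0 by (simp add: sum.reindex[OF inj_wvec])
  moreover obtain i where "w = wvec i" using \<open>w \<in> range wvec\<close> by auto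
  ultimately show "f w = 0"
    by (simp add: sum_component wvec_nth if_distrib cong: if_cong)
qed simp

lemma not_pointed_balanced_games: "\<not> pointed (balanced_games :: (real ^ ('n::finite set)) set)"
proof
  assume "pointed (balanced_games :: (real ^ ('n set)) set)"
  then have "wvec (undefined :: 'n) = 0"
    using wvec_in_lineality_space by (auto simp: pointed_def)
  then have "wvec (undefined :: 'n) $ {undefined} = 0" by simp
  then show False by (simp add: wvec_nth)
qed

theorem theorem2:
  assumes "CARD('n::finite) \<ge> 2"
  shows "polyhedron (balanced_games :: (real ^ ('n set)) set)
    \<and> cone (balanced_games :: (real ^ ('n set)) set)
    \<and> aff_dim (balanced_games :: (real ^ ('n set)) set) = 2 ^ CARD('n) - 1
    \<and> \<not> pointed (balanced_games :: (real ^ ('n set)) set)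
    \<and> subspace (lineality_space (balanced_games :: (real ^ ('n set)) set))
    \<and> dim (lineality_space (balanced_games :: (real ^ ('n set)) set)) = CARD('n)
    \<and> inj (wvec :: 'n \<Rightarrow> real ^ ('n set))
    \<and> independent (range (wvec :: 'n \<Rightarrow> real ^ ('n set)))
    \<and> span (range (wvec :: 'n \<Rightarrow> real ^ ('n set)))
        = lineality_space (balanced_games :: (real ^ ('n set)) set)"
proof (intro conjI)
  show "dim (lineality_space (balanced_games :: (real ^ ('n set)) set)) = CARD('n)"
    unfolding span_wvec[OF assms, symmetric]
    by (simp add: dim_span dim_eq_card_independent[OF independent_wvec] card_image[OF inj_wvec])
qed (simp_all add: polyhedron_balanced_games cone_balanced_games aff_dim_balanced_games
    not_pointed_balanced_games subspace_lineality_space_balanced_games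
    inj_wvec independent_wvec span_wvec[OF assms])

end
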